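(* Let $G=\mathrm{Aut}(\mathbf{K})$ for a Fraïssé structure $\mathbf{K}$ with exhaustion $\bigcup_n\mathbf{A}_n$, and let $Y\subseteq S(G)$ be a subflow. If $T\in\mathcal{F}^Y_m$ and $f\in\mathrm{Emb}(\mathbf{A}_m,\mathbf{A}_n)$, then $f(T)\in\mathcal{F}^Y_n$.
   Context: $\mathbf{K}$ is a countably infinite ultrahomogeneous relational structure, $\mathbf{A}_1\subseteq\mathbf{A}_2\subseteq\cdots$ finite substructures with $|\mathbf{A}_n|=n$ and union $\mathbf{K}$; $G$ has the pointwise convergence topology; $H_n=\mathrm{Emb}(\mathbf{A}_n,\mathbf{K})$; $i^n_m$ is the inclusion $\mathbf{A}_m\to\mathbf{A}_n$. For $f\in\mathrm{Emb}(\mathbf{A}_m,\mathbf{A}_n)$ and $T\subseteq H_m$, $f(T)=\{s\in H_n:s\circ f\in T\}$. $S(G)$ is the inverse limit of the spaces $\beta H_n$ of ultrafilters on $H_n$ along the continuous extensions of $x\mapsto x\circ i^n_m$; write $\alpha(n)$ for the $n$-th coordinate of $\alpha\in S(G)$. The right $G$-action: for $S\subseteq H_m$, $S\in(\alpha g)(m)$ iff $\{x\in H_n:x\circ g|_{\mathbf{A}_m}\in S\}\in\alpha(n)$ for any $n$ with $g(\mathbf{A}_m)\subseteq\mathbf{A}_n$. A subflow is a nonempty closed $G$-invariant subset of $S(G)$. For closed $Y\subseteq S(G)$, $\mathcal{F}^Y_m=\{T\subseteq H_m: T\in\alpha(m)\text{ for all }\alpha\in Y\}$. *)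

theory Defs
  imports "HOL-Analysis.Analysis" "HOL-Library.FuncSet"
begin

text \<open>The structure K lives on the type 'a; its relations are given by R (symbol r holds
of the tuple xs iff R r xs), with arities arity.  Substructures are subsets of 'a with the
induced relations.  Embeddings are represented extensionally (undefined off their domain).\<close>

definition relational_structure :: "('r \<Rightarrow> nat) \<Rightarrow> ('r \<Rightarrow> 'a list \<Rightarrow> bool) \<Rightarrow> bool" where
  "relational_structure arity R \<longleftrightarrow> (\<forall>r xs. R r xs \<longrightarrow> length xs = arity r)"

definition Emb :: "('r \<Rightarrow> 'a list \<Rightarrow> bool) \<Rightarrow> 'a set \<Rightarrow> 'a set \<Rightarrow> ('a \<Rightarrow> 'a) set" where
  "Emb R A B = {f. f \<in> A \<rightarrow>\<^sub>E B \<and> inj_on f A \<and>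
      (\<forall>r xs. set xs \<subseteq> A \<longrightarrow> (R r xs \<longleftrightarrow> R r (map f xs)))}"

definition Aut :: "('r \<Rightarrow> 'a list \<Rightarrow> bool) \<Rightarrow> ('a \<Rightarrow> 'a) set" where
  "Aut R = {g. bij g \<and> (\<forall>r xs. R r xs \<longleftrightarrow> R r (map g xs))}"

definition ultrahomogeneous :: "('r \<Rightarrow> 'a list \<Rightarrow> bool) \<Rightarrow> bool" where
  "ultrahomogeneous R \<longleftrightarrow>
     (\<forall>A f. finite A \<and> f \<in> Emb R A UNIV \<longrightarrow> (\<exists>g\<in>Aut R. \<forall>x\<in>A. g x = f x))"

definition exhaustion :: "(nat \<Rightarrow> 'a set) \<Rightarrow> bool" where
  "exhaustion A \<longleftrightarrow> (\<forall>n\<ge>1. finite (A n) \<and> card (A n) = n \<and> A n \<subseteq> A (Suc n))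
                      \<and> (\<Union>n\<in>{1..}. A n) = UNIV"

definition H :: "('r \<Rightarrow> 'a list \<Rightarrow> bool) \<Rightarrow> (nat \<Rightarrow> 'a set) \<Rightarrow> nat \<Rightarrow> ('a \<Rightarrow> 'a) set" where
  "H R A n = Emb R (A n) UNIV"

definition ultrafilter_on :: "'b set \<Rightarrow> 'b set set \<Rightarrow> bool" where
  "ultrafilter_on X U \<longleftrightarrow> U \<subseteq> Pow X \<and> X \<in> U \<and> {} \<notin> U
     \<and> (\<forall>S T. S \<in> U \<and> S \<subseteq> T \<and> T \<subseteq> X \<longrightarrow> T \<in> U)
     \<and> (\<forall>S\<in>U. \<forall>T\<in>U. S \<inter> T \<in> U)
     \<and> (\<forall>S. S \<subseteq> X \<longrightarrow> S \<in> U \<or> X - S \<in> U)"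

text \<open>Continuous extension \<beta>\<pi> : \<beta>X \<rightarrow> \<beta>Y of a map \<pi> : X \<rightarrow> Y.\<close>
definition beta_map :: "'b set \<Rightarrow> 'c set \<Rightarrow> ('b \<Rightarrow> 'c) \<Rightarrow> 'b set set \<Rightarrow> 'c set set" where
  "beta_map X Y \<pi> U = {S. S \<subseteq> Y \<and> {x\<in>X. \<pi> x \<in> S} \<in> U}"

text \<open>S(G): inverse limit of \<beta>H_n (n \<ge> 1) along \<beta> of x \<mapsto> x \<circ> i^n_m; coordinate 0 unused.\<close>
definition SG :: "('r \<Rightarrow> 'a list \<Rightarrow> bool) \<Rightarrow> (nat \<Rightarrow> 'a set) \<Rightarrow> (nat \<Rightarrow> ('a \<Rightarrow> 'a) set set) set" where
  "SG R A = {\<alpha>. \<alpha> 0 = {} \<and> (\<forall>n\<ge>1. ultrafilter_on (H R A n) (\<alpha> n))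
     \<and> (\<forall>m n. 1 \<le> m \<and> m \<le> n \<longrightarrow>
          \<alpha> m = beta_map (H R A n) (H R A m) (\<lambda>x. restrict x (A m)) (\<alpha> n))}"

definition SG_top :: "('r \<Rightarrow> 'a list \<Rightarrow> bool) \<Rightarrow> (nat \<Rightarrow> 'a set) \<Rightarrow> (nat \<Rightarrow> ('a \<Rightarrow> 'a) set set) topology" where
  "SG_top R A = topology_generated_by
      {{\<alpha>\<in>SG R A. S \<in> \<alpha> m} | m S. 1 \<le> m \<and> S \<subseteq> H R A m}"

text \<open>Right action: S \<in> (\<alpha> g)(m) iff {x \<in> H_n. x \<circ> g|A_m \<in> S} \<in> \<alpha>(n) where g(A_m) \<subseteq> A_n
  (we use the least such n \<ge> 1; the paper notes any such n gives the same result).\<close>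
definition act :: "('r \<Rightarrow> 'a list \<Rightarrow> bool) \<Rightarrow> (nat \<Rightarrow> 'a set) \<Rightarrow> (nat \<Rightarrow> ('a \<Rightarrow> 'a) set set)
     \<Rightarrow> ('a \<Rightarrow> 'a) \<Rightarrow> (nat \<Rightarrow> ('a \<Rightarrow> 'a) set set)" where
  "act R A \<alpha> g = (\<lambda>m. if m = 0 then {} else
     (let n = (LEAST n. 1 \<le> n \<and> g ` A m \<subseteq> A n) in
       {S. S \<subseteq> H R A m \<and> {x \<in> H R A n. restrict (x \<circ> g) (A m) \<in> S} \<in> \<alpha> n}))"

definition subflow :: "('r \<Rightarrow> 'a list \<Rightarrow> bool) \<Rightarrow> (nat \<Rightarrow> 'a set) \<Rightarrow> (nat \<Rightarrow> ('a \<Rightarrow> 'a) set set) set \<Rightarrow> bool" where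
  "subflow R A Y \<longleftrightarrow> Y \<noteq> {} \<and> Y \<subseteq> SG R A \<and> closedin (SG_top R A) Y
     \<and> (\<forall>\<alpha>\<in>Y. \<forall>g\<in>Aut R. act R A \<alpha> g \<in> Y)"

definition F :: "('r \<Rightarrow> 'a list \<Rightarrow> bool) \<Rightarrow> (nat \<Rightarrow> 'a set) \<Rightarrow> (nat \<Rightarrow> ('a \<Rightarrow> 'a) set set) set
     \<Rightarrow> nat \<Rightarrow> ('a \<Rightarrow> 'a) set set" where
  "F R A Y m = {T. T \<subseteq> H R A m \<and> (\<forall>\<alpha>\<in>Y. T \<in> \<alpha> m)}"

definition emb_image :: "('r \<Rightarrow> 'a list \<Rightarrow> bool) \<Rightarrow> (nat \<Rightarrow> 'a set) \<Rightarrow> nat \<Rightarrow> nat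
     \<Rightarrow> ('a \<Rightarrow> 'a) \<Rightarrow> ('a \<Rightarrow> 'a) set \<Rightarrow> ('a \<Rightarrow> 'a) set" where
  "emb_image R A m n f T = {s \<in> H R A n. restrict (s \<circ> f) (A m) \<in> T}"

end

theory Submission
  imports Defs
begin

(* Extend f to an automorphism g of K.  Since g agrees with f on A_m, the set f(T) is exactly
   the set of x \<in> H_n with x \<circ> g|A_m \<in> T, and that set lies in \<alpha>(n) precisely when
   T \<in> (\<alpha> g)(m); the latter holds for every \<alpha> \<in> Y because Y is G-invariant. *)

lemma exhaustion_mono:
  assumes "exhaustion A" and "1 \<le> k" and "k \<le> n"
  shows "A k \<subseteq> A n"
  using assms(3,2)
proof (induction n rule: dec_induct)
  case (step n)
  then show ?case using assms(1) unfolding exhaustion_def by (meson order.trans)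
qed simp

lemma exhaustion_finite:
  assumes "exhaustion A" and "1 \<le> n"
  shows "finite (A n)"
  using assms unfolding exhaustion_def by blast

lemma restrict_in_Emb:
  assumes "f \<in> Emb R B C" and "A \<subseteq> B"
  shows "restrict f A \<in> Emb R A C"
proof -
  have "R r xs \<longleftrightarrow> R r (map (restrict f A) xs)" if "set xs \<subseteq> A" for r xs
  proof -
    have "R r xs \<longleftrightarrow> R r (map f xs)"
      using that assms unfolding Emb_def by blast
    moreover have "map (restrict f A) xs = map f xs"
      using that by (auto intro: map_cong)
    ultimately show ?thesis by (simp only:)
  qed
  then show ?thesis
    using assms unfolding Emb_def by (auto intro: inj_on_subset)
qed

lemma Emb_subset_UNIV: "Emb R A B \<subseteq> Emb R A UNIV"
  unfolding Emb_def by auto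

lemma SG_coordinate_iff:
  assumes "\<alpha> \<in> SG R A" and "exhaustion A" and "1 \<le> k" and "k \<le> n"
  shows "{y \<in> H R A k. P y} \<in> \<alpha> k \<longleftrightarrow> {x \<in> H R A n. P (restrict x (A k))} \<in> \<alpha> n"
proof -
  have "restrict x (A k) \<in> H R A k" if "x \<in> H R A n" for x
    using that restrict_in_Emb exhaustion_mono[OF assms(2-4)] unfolding H_def by blast
  then have "{x \<in> H R A n. restrict x (A k) \<in> {y \<in> H R A k. P y}}
      = {x \<in> H R A n. P (restrict x (A k))}"
    by blast
  moreover have "\<alpha> k = beta_map (H R A n) (H R A k) (\<lambda>x. restrict x (A k)) (\<alpha> n)"
    using assms(1,3,4) unfolding SG_def by blast
  ultimately show ?thesis
    unfolding beta_map_def by auto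
qed

lemma act_at_level:
  assumes "\<alpha> \<in> SG R A" and "exhaustion A" and "1 \<le> m" and "1 \<le> n"
    and "g ` A m \<subseteq> A n"
  shows "S \<in> act R A \<alpha> g m \<longleftrightarrow>
    S \<subseteq> H R A m \<and> {x \<in> H R A n. restrict (x \<circ> g) (A m) \<in> S} \<in> \<alpha> n"
proof -
  define k where "k = (LEAST k. 1 \<le> k \<and> g ` A m \<subseteq> A k)"
  have k: "1 \<le> k" "g ` A m \<subseteq> A k" "k \<le> n"
    using LeastI[of "\<lambda>k. 1 \<le> k \<and> g ` A m \<subseteq> A k" n] Least_le[of _ n] assms(4,5)
    unfolding k_def by auto
  have restrict_twice: "restrict (restrict x (A k) \<circ> g) (A m) = restrict (x \<circ> g) (A m)" for x
    using k(2) by (auto simp: fun_eq_iff)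
  have "{y \<in> H R A k. restrict (y \<circ> g) (A m) \<in> S} \<in> \<alpha> k \<longleftrightarrow>
      {x \<in> H R A n. restrict (x \<circ> g) (A m) \<in> S} \<in> \<alpha> n"
    using SG_coordinate_iff[OF assms(1,2) k(1,3), of "\<lambda>y. restrict (y \<circ> g) (A m) \<in> S"]
    unfolding restrict_twice .
  moreover have "S \<in> act R A \<alpha> g m \<longleftrightarrow>
      S \<subseteq> H R A m \<and> {y \<in> H R A k. restrict (y \<circ> g) (A m) \<in> S} \<in> \<alpha> k"
    using assms(3) unfolding act_def k_def Let_def by simp
  ultimately show ?thesis by blast
qed

lemma ultrahomogeneous_extend_Emb:
  assumes "ultrahomogeneous R" and "finite A" and "f \<in> Emb R A B"
  shows "\<exists>g\<in>Aut R. \<forall>x\<in>A. g x = f x"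
  using assms Emb_subset_UNIV unfolding ultrahomogeneous_def by blast

theorem mainTheorem8:
  fixes R :: "'r \<Rightarrow> 'a list \<Rightarrow> bool" and arity :: "'r \<Rightarrow> nat"
    and A :: "nat \<Rightarrow> 'a set"
    and Y :: "(nat \<Rightarrow> ('a \<Rightarrow> 'a) set set) set"
    and m n :: nat and T :: "('a \<Rightarrow> 'a) set" and f :: "'a \<Rightarrow> 'a"
  assumes "countable (UNIV :: 'a set)" and "infinite (UNIV :: 'a set)"
    and "relational_structure arity R"
    and "ultrahomogeneous R"
    and "exhaustion A"
    and "subflow R A Y"
    and "1 \<le> m" and "1 \<le> n"
    and "T \<in> F R A Y m"
    and "f \<in> Emb R (A m) (A n)"
  shows "emb_image R A m n f T \<in> F R A Y n"
proof -
  obtain g where g: "g \<in> Aut R" and gf: "\<And>x. x \<in> A m \<Longrightarrow> g x = f x"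
    using ultrahomogeneous_extend_Emb[OF assms(4) exhaustion_finite[OF assms(5,7)] assms(10)]
    by blast
  have g_into: "g ` A m \<subseteq> A n"
    using assms(10) gf unfolding Emb_def by auto
  have f_image: "emb_image R A m n f T = {x \<in> H R A n. restrict (x \<circ> g) (A m) \<in> T}"
    unfolding emb_image_def using gf by (simp cong: restrict_cong)
  have "emb_image R A m n f T \<in> \<alpha> n" if "\<alpha> \<in> Y" for \<alpha>
  proof -
    have \<alpha>: "\<alpha> \<in> SG R A" and "act R A \<alpha> g \<in> Y"
      using that g assms(6) unfolding subflow_def by blast+
    then have "T \<in> act R A \<alpha> g m"
      using assms(9) unfolding F_def by blast
    then show ?thesis
      unfolding f_image act_at_level[OF \<alpha> assms(5,7,8) g_into] by blast
  qed
  then show ?thesis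
    unfolding F_def emb_image_def by auto
qed

end
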